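(* Let $(\Omega,\mathcal{F},P_0)$ be a complete probability space, $\epsilon\in(0,1)$, $\mathcal{C}\subseteq\mathcal{F}$ a sub-$\sigma$-algebra, and $\rho$ a sublinear operator on $L^{2+\epsilon}_{\mathcal{F}}(\Omega,P_0)$ with representation set $\mathcal{P}$, satisfying the standing assumptions below. Let $\xi\in L^{4+2\epsilon}_{\mathcal{F}}(\Omega,P_0)$. If $\rho$ is stable, then the minimizer of $\eta\mapsto\rho((\xi-\eta)^2)$ over $\eta\in L^{2+\epsilon}_{\mathcal{C}}(P_0)$ is unique: if $\hat\eta_1,\hat\eta_2\in L^{2+\epsilon}_{\mathcal{C}}(P_0)$ both attain $\inf_{\eta\in L^{2+\epsilon}_{\mathcal{C}}(P_0)}\rho((\xi-\eta)^2)$, then $\hat\eta_1=\hat\eta_2$ $P_0$-a.s.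
   Context: A sublinear operator is a map $\rho:L^{2+\epsilon}_{\mathcal{F}}(\Omega,P_0)\to\mathbb{R}$ that is monotone, constant preserving, sub-additive and positively homogeneous. Its representation set $\mathcal{P}$ is the family of all linear expectations (identified with probability measures $P$) dominated by $\rho$, so $\rho(\xi)=\max_{P\in\mathcal{P}}E_P[\xi]$; $\rho((\xi-\eta)^2)$ means $\sup_{P\in\mathcal{P}}E_P[(\xi-\eta)^2]$. Write $f^P=dP/dP_0$, $\mathcal{D}=\{f^P:P\in\mathcal{P}\}$. Standing assumptions: every $P\in\mathcal{P}$ is equivalent to $P_0$; $\mathcal{D}$ is norm-bounded in $L^{1+\frac{2}{\epsilon}}_{\mathcal{F}}(P_0)$ and $\sigma(L^{1+\frac{2}{\epsilon}}(P_0),L^{1+\frac{\epsilon}{2}}(P_0))$-compact. $\rho$ is stable if for each $P\in\mathcal{P}$ the random variable $f^P/E_{P_0}[f^P\mid\mathcal{C}]$ lies in $\mathcal{D}$. $L^{2+\epsilon}_{\mathcal{C}}(P_0)$ denotes the $\mathcal{C}$-measurable elements of $L^{2+\epsilon}(P_0)$. *)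

theory Defs
  imports "HOL-Probability.Probability"
begin

definition Lp :: "'a measure \<Rightarrow> real \<Rightarrow> ('a \<Rightarrow> real) set" where
  "Lp M p = {X. X \<in> borel_measurable M \<and> integrable M (\<lambda>x. \<bar>X x\<bar> powr p)}"

definition LpC :: "'a measure \<Rightarrow> 'a measure \<Rightarrow> real \<Rightarrow> ('a \<Rightarrow> real) set" where
  "LpC M C p = {X. X \<in> borel_measurable C \<and> integrable M (\<lambda>x. \<bar>X x\<bar> powr p)}"

definition sublinear_operator :: "'a measure \<Rightarrow> real \<Rightarrow> (('a \<Rightarrow> real) \<Rightarrow> real) \<Rightarrow> bool" where
  "sublinear_operator M p \<rho> \<longleftrightarrow>
     (\<forall>X\<in>Lp M p. \<forall>Y\<in>Lp M p. (AE x in M. X x \<le> Y x) \<longrightarrow> \<rho> X \<le> \<rho> Y) \<and>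
     (\<forall>c::real. \<rho> (\<lambda>_. c) = c) \<and>
     (\<forall>X\<in>Lp M p. \<forall>Y\<in>Lp M p. \<rho> (\<lambda>x. X x + Y x) \<le> \<rho> X + \<rho> Y) \<and>
     (\<forall>X\<in>Lp M p. \<forall>a::real. a \<ge> 0 \<longrightarrow> \<rho> (\<lambda>x. a * X x) = a * \<rho> X)"

text \<open>The set D of densities f^P = dP/dP0 of the probability measures P (absolutely
  continuous w.r.t. P0, as linear expectations on L^p(P0)) dominated by \<rho>:
  E_P[X] = E_P0[f X] \<le> \<rho> X for all X in L^p.\<close>
definition rep_densities :: "'a measure \<Rightarrow> real \<Rightarrow> (('a \<Rightarrow> real) \<Rightarrow> real) \<Rightarrow> ('a \<Rightarrow> real) set" where
  "rep_densities M p \<rho> = {f. f \<in> borel_measurable M \<and> (AE x in M. 0 \<le> f x) \<and>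
      integrable M f \<and> (\<integral>x. f x \<partial>M) = 1 \<and>
      (\<forall>X\<in>Lp M p. integrable M (\<lambda>x. f x * X x) \<and> (\<integral>x. f x * X x \<partial>M) \<le> \<rho> X)}"

text \<open>The weak topology sigma(L^q, L^r) on (representatives of) random variables:
  initial topology of the maps f \<mapsto> E[f g], g \<in> L^r.\<close>
definition weak_topology :: "'a measure \<Rightarrow> real \<Rightarrow> ('a \<Rightarrow> real) topology" where
  "weak_topology M r = topology_generated_by
     {{f. (\<integral>x. f x * g x \<partial>M) \<in> U} | g U. g \<in> Lp M r \<and> open U}"

text \<open>rho((xi - eta)^2) := sup over P in the representation set of E_P[(xi-eta)^2].\<close>
definition rho_sq :: "'a measure \<Rightarrow> real \<Rightarrow> (('a \<Rightarrow> real) \<Rightarrow> real) \<Rightarrow> ('a \<Rightarrow> real) \<Rightarrow> ('a \<Rightarrow> real) \<Rightarrow> real" where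
  "rho_sq M p \<rho> \<xi> \<eta> = (SUP f\<in>rep_densities M p \<rho>. \<integral>x. f x * (\<xi> x - \<eta> x)\<^sup>2 \<partial>M)"

definition stable :: "'a measure \<Rightarrow> 'a measure \<Rightarrow> real \<Rightarrow> (('a \<Rightarrow> real) \<Rightarrow> real) \<Rightarrow> bool" where
  "stable M C p \<rho> \<longleftrightarrow> (\<forall>f\<in>rep_densities M p \<rho>. (\<lambda>x. f x / real_cond_exp M C f x) \<in> rep_densities M p \<rho>)"

end

theory Submission
  imports Defs
begin

text \<open>Let \<open>\<eta>\<close> be the midpoint of two minimizers \<open>\<eta>\<^sub>1, \<eta>\<^sub>2\<close> with minimal value \<open>m\<close>. By weak
  compactness of the densities, \<open>\<rho>((\<xi> - \<eta>)\<^sup>2) \<ge> m\<close> is attained at some density \<open>f\<close>, while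
  \<open>E[f (\<xi> - \<eta>\<^sub>i)\<^sup>2] \<le> \<rho>((\<xi> - \<eta>\<^sub>i)\<^sup>2) = m\<close>. The weighted parallelogram identity
  \<open>E[f (\<eta>\<^sub>1 - \<eta>\<^sub>2)\<^sup>2] = 2 E[f (\<xi> - \<eta>\<^sub>1)\<^sup>2] + 2 E[f (\<xi> - \<eta>\<^sub>2)\<^sup>2] - 4 E[f (\<xi> - \<eta>)\<^sup>2]\<close>
  then makes \<open>E[f (\<eta>\<^sub>1 - \<eta>\<^sub>2)\<^sup>2] \<le> 0\<close>, and \<open>f > 0\<close> a.s. forces \<open>\<eta>\<^sub>1 = \<eta>\<^sub>2\<close> a.s.\<close>

lemma abs_powr_le_max_bound:
  fixes a b c k p :: real
  assumes "0 \<le> k" "0 < p" "\<bar>c\<bar> \<le> k * max \<bar>a\<bar> \<bar>b\<bar>"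
  shows "\<bar>c\<bar> powr p \<le> k powr p * (\<bar>a\<bar> powr p + \<bar>b\<bar> powr p)"
proof -
  have "\<bar>c\<bar> powr p \<le> (k * max \<bar>a\<bar> \<bar>b\<bar>) powr p"
    using assms by (intro powr_mono2) auto
  also have "\<dots> = k powr p * max \<bar>a\<bar> \<bar>b\<bar> powr p"
    using assms by (simp add: powr_mult)
  also have "max \<bar>a\<bar> \<bar>b\<bar> powr p \<le> \<bar>a\<bar> powr p + \<bar>b\<bar> powr p"
    by (cases "\<bar>a\<bar> \<le> \<bar>b\<bar>") (auto simp: max_def)
  hence "k powr p * max \<bar>a\<bar> \<bar>b\<bar> powr p \<le> k powr p * (\<bar>a\<bar> powr p + \<bar>b\<bar> powr p)"
    by (intro mult_left_mono) auto
  finally show ?thesis .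
qed

lemma integrable_abs_powr_dominated:
  fixes X Y Z :: "'a \<Rightarrow> real"
  assumes "integrable M (\<lambda>x. \<bar>X x\<bar> powr p)" "integrable M (\<lambda>x. \<bar>Y x\<bar> powr p)"
    and "Z \<in> borel_measurable M" "0 \<le> k" "0 < p"
    and "\<And>x. \<bar>Z x\<bar> \<le> k * max \<bar>X x\<bar> \<bar>Y x\<bar>"
  shows "integrable M (\<lambda>x. \<bar>Z x\<bar> powr p)"
proof (rule Bochner_Integration.integrable_bound)
  show "integrable M (\<lambda>x. k powr p * (\<bar>X x\<bar> powr p + \<bar>Y x\<bar> powr p))"
    using assms by auto
  show "(\<lambda>x. \<bar>Z x\<bar> powr p) \<in> borel_measurable M"
    using assms by measurable
  show "AE x in M. norm (\<bar>Z x\<bar> powr p) \<le> norm (k powr p * (\<bar>X x\<bar> powr p + \<bar>Y x\<bar> powr p))"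
    using abs_powr_le_max_bound[OF assms(4,5) assms(6)] by auto
qed

lemma Lp_diff:
  assumes "X \<in> Lp M p" "Y \<in> Lp M p" "0 < p"
  shows "(\<lambda>x. X x - Y x) \<in> Lp M p"
  using assms integrable_abs_powr_dominated[of M X p Y "\<lambda>x. X x - Y x" 2]
  unfolding Lp_def by auto

lemma LpC_midpoint:
  assumes "X \<in> LpC M C p" "Y \<in> LpC M C p" "0 < p" "subalgebra M C"
  shows "(\<lambda>x. (X x + Y x) / 2) \<in> LpC M C p"
proof -
  have "X \<in> borel_measurable M" "Y \<in> borel_measurable M"
    using assms measurable_from_subalg[OF assms(4)] unfolding LpC_def by auto
  then show ?thesis
    using assms integrable_abs_powr_dominated[of M X p Y "\<lambda>x. (X x + Y x) / 2" 1]
    unfolding LpC_def by auto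
qed

lemma LpC_subset_Lp:
  assumes "subalgebra M C"
  shows "LpC M C p \<subseteq> Lp M p"
  using measurable_from_subalg[OF assms] unfolding LpC_def Lp_def by auto

lemma abs_powr_le_one_plus_abs_powr:
  fixes x p q :: real
  assumes "0 < p" "p \<le> q"
  shows "\<bar>x\<bar> powr p \<le> 1 + \<bar>x\<bar> powr q"
proof (cases "\<bar>x\<bar> \<le> 1")
  case True
  hence "\<bar>x\<bar> powr p \<le> 1"
    using assms powr_mono2[of p "\<bar>x\<bar>" 1] by simp
  then show ?thesis
    by (smt (verit) powr_ge_zero)
next
  case False
  hence "\<bar>x\<bar> powr p \<le> \<bar>x\<bar> powr q"
    using assms by (intro powr_mono) auto
  then show ?thesis by simp
qed

lemma (in prob_space) Lp_mono_exponent: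
  assumes "X \<in> Lp M q" "0 < p" "p \<le> q"
  shows "X \<in> Lp M p"
proof -
  have X: "X \<in> borel_measurable M" "integrable M (\<lambda>x. \<bar>X x\<bar> powr q)"
    using assms(1) unfolding Lp_def by auto
  have "integrable M (\<lambda>x. \<bar>X x\<bar> powr p)"
  proof (rule Bochner_Integration.integrable_bound)
    show "integrable M (\<lambda>x. 1 + \<bar>X x\<bar> powr q)"
      using X by auto
    show "(\<lambda>x. \<bar>X x\<bar> powr p) \<in> borel_measurable M"
      using X by measurable
    show "AE x in M. norm (\<bar>X x\<bar> powr p) \<le> norm (1 + \<bar>X x\<bar> powr q)"
      using abs_powr_le_one_plus_abs_powr[OF assms(2,3)] by (auto intro!: always_eventually)
  qed
  with X show ?thesis
    unfolding Lp_def by auto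
qed

lemma abs_power2_powr: "\<bar>(x::real)\<^sup>2\<bar> powr q = \<bar>x\<bar> powr (2 * q)"
proof (cases "x = 0")
  case False
  then have "\<bar>x\<^sup>2\<bar> = \<bar>x\<bar> powr 2"
    by (simp add: powr_realpow power2_abs)
  then have "\<bar>x\<^sup>2\<bar> powr q = (\<bar>x\<bar> powr 2) powr q"
    by (simp only:)
  then show ?thesis
    by (simp only: powr_powr)
qed simp

lemma Lp_power2:
  assumes "X \<in> Lp M (2 * q)"
  shows "(\<lambda>x. (X x)\<^sup>2) \<in> Lp M q"
proof -
  have "(\<lambda>x. \<bar>(X x)\<^sup>2\<bar> powr q) = (\<lambda>x. \<bar>X x\<bar> powr (2 * q))"
    by (simp only: abs_power2_powr)
  with assms show ?thesis
    unfolding Lp_def by auto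
qed

lemma integrable_mult_Lp_conjugate:
  fixes f g :: "'a \<Rightarrow> real"
  assumes "1 < r" "1 < q" "1 / r + 1 / q = 1" "f \<in> Lp M r" "g \<in> Lp M q"
  shows "integrable M (\<lambda>x. f x * g x)"
proof (rule Bochner_Integration.integrable_bound)
  show "integrable M (\<lambda>x. \<bar>f x\<bar> powr r / r + \<bar>g x\<bar> powr q / q)"
    using assms(4,5) unfolding Lp_def by auto
  show "(\<lambda>x. f x * g x) \<in> borel_measurable M"
    using assms(4,5) unfolding Lp_def by auto
  have "norm (f x * g x) \<le> norm (\<bar>f x\<bar> powr r / r + \<bar>g x\<bar> powr q / q)" for x
  proof -
    have "0 \<le> \<bar>f x\<bar> powr r / r + \<bar>g x\<bar> powr q / q"
      using assms(1,2) by simp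
    then show ?thesis
      using Youngs_inequality[OF assms(1-3), of "\<bar>f x\<bar>" "\<bar>g x\<bar>"] by (simp add: abs_mult)
  qed
  then show "AE x in M. norm (f x * g x) \<le> norm (\<bar>f x\<bar> powr r / r + \<bar>g x\<bar> powr q / q)"
    by (auto intro!: always_eventually)
qed

lemma topspace_weak_topology:
  assumes "g \<in> Lp M r"
  shows "topspace (weak_topology M r) = UNIV"
proof -
  have "UNIV \<in> {{f. (\<integral>x. f x * g x \<partial>M) \<in> U} | g U. g \<in> Lp M r \<and> open U}"
    using assms by (intro CollectI exI[of _ g] exI[of _ UNIV]) auto
  then show ?thesis
    unfolding weak_topology_def by auto
qed

lemma continuous_map_weak_topology_pairing:
  assumes "g \<in> Lp M r"
  shows "continuous_map (weak_topology M r) euclideanreal (\<lambda>f. \<integral>x. f x * g x \<partial>M)"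
  unfolding continuous_map topspace_weak_topology[OF assms]
proof (intro conjI allI impI)
  fix U :: "real set"
  assume "openin euclideanreal U"
  then have "{f. (\<integral>x. f x * g x \<partial>M) \<in> U} \<in>
      {{f. (\<integral>x. f x * g x \<partial>M) \<in> U} | g U. g \<in> Lp M r \<and> open U}"
    using assms by auto
  then show "openin (weak_topology M r) {f \<in> UNIV. (\<integral>x. f x * g x \<partial>M) \<in> U}"
    unfolding weak_topology_def by (simp add: topology_generated_by_Basis)
qed simp

lemma compact_image_weak_topology_pairing:
  assumes "compactin (weak_topology M r) D" "g \<in> Lp M r"
  shows "compact ((\<lambda>f. \<integral>x. f x * g x \<partial>M) ` D)"
  using image_compactin[OF assms(1) continuous_map_weak_topology_pairing[OF assms(2)]]
  by simp

lemma rho_sq_upper: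
  assumes "compactin (weak_topology M q) (rep_densities M p \<rho>)"
    and "(\<lambda>x. (\<xi> x - \<eta> x)\<^sup>2) \<in> Lp M q" "f \<in> rep_densities M p \<rho>"
  shows "(\<integral>x. f x * (\<xi> x - \<eta> x)\<^sup>2 \<partial>M) \<le> rho_sq M p \<rho> \<xi> \<eta>"
  unfolding rho_sq_def
  using compact_image_weak_topology_pairing[OF assms(1,2)] assms(3)
  by (intro cSup_upper) (auto intro: bounded_imp_bdd_above compact_imp_bounded)

lemma rho_sq_attained:
  assumes "compactin (weak_topology M q) (rep_densities M p \<rho>)"
    and "rep_densities M p \<rho> \<noteq> {}" "(\<lambda>x. (\<xi> x - \<eta> x)\<^sup>2) \<in> Lp M q"
  obtains f where "f \<in> rep_densities M p \<rho>"
    and "rho_sq M p \<rho> \<xi> \<eta> = (\<integral>x. f x * (\<xi> x - \<eta> x)\<^sup>2 \<partial>M)"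
proof -
  let ?S = "(\<lambda>f. \<integral>x. f x * (\<xi> x - \<eta> x)\<^sup>2 \<partial>M) ` rep_densities M p \<rho>"
  obtain s where s: "s \<in> ?S" "\<forall>t\<in>?S. t \<le> s"
    using compact_attains_sup[OF compact_image_weak_topology_pairing[OF assms(1,3)]] assms(2)
    by blast
  then have "Sup ?S = s"
    by (intro cSup_eq_maximum) auto
  with s(1) that show ?thesis
    unfolding rho_sq_def by auto
qed

lemma ae_eq_if_midpoint_not_better:
  fixes f a b c :: "'a \<Rightarrow> real"
  assumes f_pos: "AE x in M. 0 < f x"
    and int_a: "integrable M (\<lambda>x. f x * (c x - a x)\<^sup>2)"
    and int_b: "integrable M (\<lambda>x. f x * (c x - b x)\<^sup>2)"
    and int_mid: "integrable M (\<lambda>x. f x * (c x - (a x + b x) / 2)\<^sup>2)"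
    and "(\<integral>x. f x * (c x - a x)\<^sup>2 \<partial>M) \<le> m" "(\<integral>x. f x * (c x - b x)\<^sup>2 \<partial>M) \<le> m"
    and "m \<le> (\<integral>x. f x * (c x - (a x + b x) / 2)\<^sup>2 \<partial>M)"
  shows "AE x in M. a x = b x"
proof -
  define d where "d x = f x * (a x - b x)\<^sup>2" for x
  have parallelogram: "d x = 2 * (f x * (c x - a x)\<^sup>2) + 2 * (f x * (c x - b x)\<^sup>2)
      - 4 * (f x * (c x - (a x + b x) / 2)\<^sup>2)" for x
    unfolding d_def by (simp add: power2_eq_square algebra_simps)
  have d_int: "integrable M d"
    unfolding parallelogram using int_a int_b int_mid by auto
  have d_nonneg: "AE x in M. 0 \<le> d x"
    using f_pos by (auto simp: d_def elim!: eventually_mono)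
  have "integral\<^sup>L M d = 2 * (\<integral>x. f x * (c x - a x)\<^sup>2 \<partial>M)
      + 2 * (\<integral>x. f x * (c x - b x)\<^sup>2 \<partial>M) - 4 * (\<integral>x. f x * (c x - (a x + b x) / 2)\<^sup>2 \<partial>M)"
    unfolding parallelogram using int_a int_b int_mid by simp
  then have "integral\<^sup>L M d \<le> 0"
    using assms(5-7) by linarith
  then have "integral\<^sup>L M d = 0"
    using integral_nonneg_AE[OF d_nonneg] by linarith
  then have "AE x in M. d x = 0"
    using integral_nonneg_eq_0_iff_AE[OF d_int d_nonneg] by simp
  with f_pos show ?thesis
    by eventually_elim (auto simp: d_def)
qed

lemma rho_sq_minimizer_unique:
  fixes M C :: "'a measure" and p q r :: real and \<rho> :: "('a \<Rightarrow> real) \<Rightarrow> real"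
    and \<xi> \<eta>1 \<eta>2 :: "'a \<Rightarrow> real"
  defines "D \<equiv> rep_densities M p \<rho>"
  assumes "subalgebra M C" and p_eq: "p = 2 * q"
    and conj: "1 < r" "1 < q" "1 / r + 1 / q = 1"
    and "D \<noteq> {}" "D \<subseteq> Lp M r" "\<forall>f\<in>D. AE x in M. 0 < f x"
    and compact: "compactin (weak_topology M q) D"
    and "\<xi> \<in> Lp M p"
    and \<eta>1: "\<eta>1 \<in> LpC M C p"
      "rho_sq M p \<rho> \<xi> \<eta>1 = (INF \<eta>\<in>LpC M C p. rho_sq M p \<rho> \<xi> \<eta>)"
    and \<eta>2: "\<eta>2 \<in> LpC M C p"
      "rho_sq M p \<rho> \<xi> \<eta>2 = (INF \<eta>\<in>LpC M C p. rho_sq M p \<rho> \<xi> \<eta>)"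
  shows "AE x in M. \<eta>1 x = \<eta>2 x"
proof -
  let ?m = "INF \<eta>\<in>LpC M C p. rho_sq M p \<rho> \<xi> \<eta>"
  let ?err = "\<lambda>f \<eta>. \<integral>x. f x * (\<xi> x - \<eta> x)\<^sup>2 \<partial>M"
  have sq_Lp: "(\<lambda>x. (\<xi> x - \<eta> x)\<^sup>2) \<in> Lp M q" if "\<eta> \<in> LpC M C p" for \<eta>
    using that LpC_subset_Lp[OF \<open>subalgebra M C\<close>] \<open>\<xi> \<in> Lp M p\<close> conj(2)
    unfolding p_eq by (intro Lp_power2 Lp_diff) auto
  have upper: "?err f \<eta> \<le> rho_sq M p \<rho> \<xi> \<eta>" if "\<eta> \<in> LpC M C p" "f \<in> D" for f \<eta>
    using rho_sq_upper[OF compact[unfolded D_def] sq_Lp] that unfolding D_def by blast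
  have integrable: "integrable M (\<lambda>x. f x * (\<xi> x - \<eta> x)\<^sup>2)"
    if "\<eta> \<in> LpC M C p" "f \<in> D" for f \<eta>
    using integrable_mult_Lp_conjugate[OF conj] sq_Lp that \<open>D \<subseteq> Lp M r\<close> by blast
  have nonneg: "0 \<le> rho_sq M p \<rho> \<xi> \<eta>" if "\<eta> \<in> LpC M C p" for \<eta>
  proof -
    obtain f where "f \<in> D"
      using \<open>D \<noteq> {}\<close> by blast
    then have "0 \<le> ?err f \<eta>"
      unfolding D_def rep_densities_def by (auto intro!: integral_nonneg_AE elim!: eventually_mono)
    also have "\<dots> \<le> rho_sq M p \<rho> \<xi> \<eta>"
      using upper[OF that \<open>f \<in> D\<close>] .
    finally show ?thesis .
  qed
  let ?\<eta> = "\<lambda>x. (\<eta>1 x + \<eta>2 x) / 2"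
  have \<eta>: "?\<eta> \<in> LpC M C p"
    using \<eta>1(1) \<eta>2(1) conj(2) p_eq \<open>subalgebra M C\<close> by (intro LpC_midpoint) auto
  obtain f where f: "f \<in> D" "rho_sq M p \<rho> \<xi> ?\<eta> = ?err f ?\<eta>"
    using rho_sq_attained[OF compact[unfolded D_def] _ sq_Lp[OF \<eta>]] \<open>D \<noteq> {}\<close>
    unfolding D_def by blast
  show ?thesis
  proof (rule ae_eq_if_midpoint_not_better)
    show "AE x in M. 0 < f x"
      using f(1) \<open>\<forall>f\<in>D. AE x in M. 0 < f x\<close> by blast
    show "?err f \<eta>1 \<le> ?m"
      using upper[OF \<eta>1(1) f(1)] \<eta>1(2) by simp
    show "?err f \<eta>2 \<le> ?m"
      using upper[OF \<eta>2(1) f(1)] \<eta>2(2) by simp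
    show "?m \<le> ?err f ?\<eta>"
      using \<eta> nonneg f(2) by (metis (no_types, lifting) cINF_lower bdd_belowI2)
  qed (use integrable[OF _ f(1)] \<eta>1(1) \<eta>2(1) \<eta> in simp_all)
qed

theorem theorem5:
  fixes M C :: "'a measure" and \<epsilon> :: real and \<rho> :: "('a \<Rightarrow> real) \<Rightarrow> real"
    and \<xi> \<eta>1 \<eta>2 :: "'a \<Rightarrow> real"
  assumes "prob_space M" and "complete_measure M"
    and "0 < \<epsilon>" and "\<epsilon> < 1"
    and "subalgebra M C"
    and "sublinear_operator M (2 + \<epsilon>) \<rho>"
    and rep: "\<forall>X\<in>Lp M (2 + \<epsilon>). \<exists>f\<in>rep_densities M (2 + \<epsilon>) \<rho>. \<rho> X = (\<integral>x. f x * X x \<partial>M)"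
    and equiv: "\<forall>f\<in>rep_densities M (2 + \<epsilon>) \<rho>. AE x in M. 0 < f x"
    and bounded: "rep_densities M (2 + \<epsilon>) \<rho> \<subseteq> Lp M (1 + 2 / \<epsilon>)"
      "\<exists>B. \<forall>f\<in>rep_densities M (2 + \<epsilon>) \<rho>. (\<integral>x. \<bar>f x\<bar> powr (1 + 2 / \<epsilon>) \<partial>M) \<le> B"
    and compact: "compactin (weak_topology M (1 + \<epsilon> / 2)) (rep_densities M (2 + \<epsilon>) \<rho>)"
    and "\<xi> \<in> Lp M (4 + 2 * \<epsilon>)"
    and "stable M C (2 + \<epsilon>) \<rho>"
    and "\<eta>1 \<in> LpC M C (2 + \<epsilon>)"
    and "rho_sq M (2 + \<epsilon>) \<rho> \<xi> \<eta>1 = (INF \<eta>\<in>LpC M C (2 + \<epsilon>). rho_sq M (2 + \<epsilon>) \<rho> \<xi> \<eta>)"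
    and "\<eta>2 \<in> LpC M C (2 + \<epsilon>)"
    and "rho_sq M (2 + \<epsilon>) \<rho> \<xi> \<eta>2 = (INF \<eta>\<in>LpC M C (2 + \<epsilon>). rho_sq M (2 + \<epsilon>) \<rho> \<xi> \<eta>)"
  shows "AE x in M. \<eta>1 x = \<eta>2 x"
proof (rule rho_sq_minimizer_unique[where q = "1 + \<epsilon> / 2" and r = "1 + 2 / \<epsilon>"])
  interpret prob_space M by fact
  have "1 / (1 + 2 / \<epsilon>) = \<epsilon> / (\<epsilon> + 2)" "1 / (1 + \<epsilon> / 2) = 2 / (\<epsilon> + 2)"
    using \<open>0 < \<epsilon>\<close> by (simp_all add: field_simps)
  then show "1 / (1 + 2 / \<epsilon>) + 1 / (1 + \<epsilon> / 2) = 1"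
    using \<open>0 < \<epsilon>\<close> by (simp add: add_divide_distrib[symmetric])
  have "(\<lambda>_. 0) \<in> Lp M (2 + \<epsilon>)"
    unfolding Lp_def by simp
  then show "rep_densities M (2 + \<epsilon>) \<rho> \<noteq> {}"
    using rep by blast
  show "\<xi> \<in> Lp M (2 + \<epsilon>)"
    using Lp_mono_exponent[OF \<open>\<xi> \<in> Lp M (4 + 2 * \<epsilon>)\<close>] \<open>0 < \<epsilon>\<close> by simp
qed (use assms in simp_all)

end
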